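(* Let $A,B\subset\mathbb R^n$ with $\dim_H(A\times B)<n$, let $M_2>M_1>0$, and let $f: B\times\mathbb R^n\to\mathbb R^n$ satisfy $\|f(x,t)-f(y,t)\|\le M_1\|x-y\|$ and $\|f(x,t)-f(x,t')\|\le M_1\|t-t'\|$ for all $x,y\in B$, $t,t'\in\mathbb R^n$. Then the set $\Delta=\{t\in\mathbb R^n:\ (M_2t+f(B,t))\cap A\ne\varnothing\}$ has Lebesgue measure zero in $\mathbb R^n$, where $M_2t+f(B,t)=\{M_2t+f(x,t): x\in B\}$.
   Context: $\dim_H$ denotes Hausdorff dimension. *)

theory Defs
  imports "HOL-Analysis.Analysis"
begin

definition hausdorff_pre :: "real \<Rightarrow> real \<Rightarrow> 'a::metric_space set \<Rightarrow> ennreal" where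
  "hausdorff_pre s \<delta> E =
     (INF U \<in> {U :: nat \<Rightarrow> 'a set. E \<subseteq> (\<Union>i. U i) \<and>
                  (\<forall>i. bounded (U i) \<and> diameter (U i) \<le> \<delta>)}.
        (\<Sum>i. ennreal (diameter (U i) powr s)))"

definition hausdorff_measure :: "real \<Rightarrow> 'a::metric_space set \<Rightarrow> ennreal" where
  "hausdorff_measure s E = (SUP \<delta> \<in> {0<..}. hausdorff_pre s \<delta> E)"

definition hausdorff_dim :: "'a::metric_space set \<Rightarrow> real" where
  "hausdorff_dim E = Inf {s. 0 \<le> s \<and> hausdorff_measure s E = 0}"

end

theory Submission
  imports Defs
begin

text \<open>If \<open>M\<^sub>2 t + f x t = a\<close> with \<open>x \<in> B\<close>, then \<open>t\<close> is determined by \<open>(a, x)\<close> and depends on it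
  with Lipschitz constant \<open>L = (1 + M\<^sub>1) / (M\<^sub>2 - M\<^sub>1)\<close>, because \<open>t \<mapsto> M\<^sub>2 t + f x t\<close> expands
  distances by at least \<open>M\<^sub>2 - M\<^sub>1\<close>. Hence \<open>\<Delta>\<close> is an \<open>L\<close>-Lipschitz image of a subset of
  \<open>A \<times> B\<close>. Since \<open>dim\<^sub>H (A \<times> B) < n\<close>, some \<open>s < n\<close> has \<open>H\<^sup>s(A \<times> B) = 0\<close>; covering \<open>A \<times> B\<close> by
  sets \<open>U\<^sub>i\<close> of diameter at most 1 with \<open>\<Sum> diam(U\<^sub>i)\<^sup>s\<close> small, \<open>\<Delta>\<close> is covered by balls of radius
  \<open>L diam(U\<^sub>i)\<close>, of total volume at most \<open>c L\<^sup>n \<Sum> diam(U\<^sub>i)\<^sup>n \<le> c L\<^sup>n \<Sum> diam(U\<^sub>i)\<^sup>s\<close>.\<close>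

lemma hausdorff_pre_mono:
  "E \<subseteq> F \<Longrightarrow> hausdorff_pre s \<delta> E \<le> hausdorff_pre s \<delta> F"
  unfolding hausdorff_pre_def by (rule INF_superset_mono) auto

lemma hausdorff_pre_le_cover:
  assumes "E \<subseteq> (\<Union>i. U i)" "\<And>i. bounded (U i)" "\<And>i. diameter (U i) \<le> \<delta>"
  shows "hausdorff_pre s \<delta> E \<le> (\<Sum>i. ennreal (diameter (U i) powr s))"
  unfolding hausdorff_pre_def using assms by (intro INF_lower) auto

lemma hausdorff_pre_lessE:
  assumes "hausdorff_pre s \<delta> E < c"
  obtains U where "E \<subseteq> (\<Union>i. U i)" "\<And>i. bounded (U i)" "\<And>i. diameter (U i) \<le> \<delta>"
    "(\<Sum>i. ennreal (diameter (U i) powr s)) < c"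
  using assms unfolding hausdorff_pre_def INF_less_iff by blast

lemma hausdorff_pre_le_finite_cover:
  assumes "finite I" "E \<subseteq> (\<Union>i\<in>I. C i)" "0 \<le> \<delta>"
    and "\<And>i. i \<in> I \<Longrightarrow> bounded (C i)" "\<And>i. i \<in> I \<Longrightarrow> diameter (C i) \<le> \<delta>"
  shows "hausdorff_pre s \<delta> E \<le> (\<Sum>i\<in>I. ennreal (diameter (C i) powr s))"
proof -
  obtain h where h: "bij_betw h {..<card I} I"
    using ex_bij_betw_nat_finite[OF assms(1)] by (auto simp: atLeast0LessThan)
  define U where "U j = (if j < card I then C (h j) else {})" for j
  have "E \<subseteq> (\<Union>j. U j)"
  proof
    fix y assume "y \<in> E"
    then obtain i where "i \<in> I" "y \<in> C i" using assms(2) by blast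
    moreover from \<open>i \<in> I\<close> obtain j where "j < card I" "i = h j"
      using h by (auto simp: bij_betw_def)
    ultimately show "y \<in> (\<Union>j. U j)" unfolding U_def by auto
  qed
  moreover have "bounded (U j)" "diameter (U j) \<le> \<delta>" for j
    using assms(3-5) bij_betwE[OF h] by (auto simp: U_def)
  ultimately have "hausdorff_pre s \<delta> E \<le> (\<Sum>j. ennreal (diameter (U j) powr s))"
    by (rule hausdorff_pre_le_cover)
  also have "\<dots> = (\<Sum>j<card I. ennreal (diameter (U j) powr s))"
    by (rule suminf_finite) (auto simp: U_def)
  also have "\<dots> = (\<Sum>j<card I. ennreal (diameter (C (h j)) powr s))"
    by (rule sum.cong) (auto simp: U_def)
  also have "\<dots> = (\<Sum>i\<in>I. ennreal (diameter (C i) powr s))"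
    by (rule sum.reindex_bij_betw[OF h])
  finally show ?thesis .
qed

lemma hausdorff_pre_UN_le:
  assumes "\<And>k. E k \<subseteq> (\<Union>i. U k i)" "\<And>k i. bounded (U k i)" "\<And>k i. diameter (U k i) \<le> \<delta>"
  shows "hausdorff_pre s \<delta> (\<Union>k. E k) \<le> (\<Sum>k. \<Sum>i. ennreal (diameter (U k i) powr s))"
proof -
  define V where "V n = case_prod U (prod_decode n)" for n
  have "(\<Union>k. E k) \<subseteq> (\<Union>n. V n)"
  proof
    fix y assume "y \<in> (\<Union>k. E k)"
    then obtain k i where "y \<in> U k i" using assms(1) by blast
    then have "y \<in> V (prod_encode (k, i))" by (simp add: V_def)
    then show "y \<in> (\<Union>n. V n)" by blast
  qed
  moreover have "bounded (V n)" "diameter (V n) \<le> \<delta>" for n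
    using assms(2,3) by (simp_all add: V_def split: prod.split)
  ultimately have "hausdorff_pre s \<delta> (\<Union>k. E k) \<le> (\<Sum>n. ennreal (diameter (V n) powr s))"
    by (rule hausdorff_pre_le_cover)
  also have "\<dots> = (\<Sum>k. \<Sum>i. ennreal (diameter (U k i) powr s))"
    unfolding V_def by (rule suminf_ennreal_2dimen) simp
  finally show ?thesis .
qed

lemma hausdorff_pre_UN_eq_0:
  fixes E :: "nat \<Rightarrow> 'a::metric_space set"
  assumes "\<And>k. hausdorff_pre s \<delta> (E k) = 0"
  shows "hausdorff_pre s \<delta> (\<Union>k. E k) = 0"
proof -
  have "hausdorff_pre s \<delta> (\<Union>k. E k) \<le> 0 + ennreal e" if "0 < e" for e
  proof -
    have "\<exists>U. E k \<subseteq> (\<Union>i. U i) \<and> (\<forall>i. bounded (U i) \<and> diameter (U i) \<le> \<delta>) \<and>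
          (\<Sum>i. ennreal (diameter (U i) powr s)) < ennreal (e * (1/2)^Suc k)" for k
    proof -
      have "hausdorff_pre s \<delta> (E k) < ennreal (e * (1/2)^Suc k)"
        using assms \<open>0 < e\<close> by simp
      then obtain U where "E k \<subseteq> (\<Union>i. U i)" "\<And>i. bounded (U i)" "\<And>i. diameter (U i) \<le> \<delta>"
        "(\<Sum>i. ennreal (diameter (U i) powr s)) < ennreal (e * (1/2)^Suc k)"
        by (rule hausdorff_pre_lessE) blast
      then show ?thesis by blast
    qed
    then obtain U where U: "\<And>k. E k \<subseteq> (\<Union>i. U k i)" "\<And>k i. bounded (U k i)"
      "\<And>k i. diameter (U k i) \<le> \<delta>"
      "\<And>k. (\<Sum>i. ennreal (diameter (U k i) powr s)) < ennreal (e * (1/2)^Suc k)"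
      by metis
    have "hausdorff_pre s \<delta> (\<Union>k. E k) \<le> (\<Sum>k. \<Sum>i. ennreal (diameter (U k i) powr s))"
      using U(1-3) by (rule hausdorff_pre_UN_le)
    also have "\<dots> \<le> (\<Sum>k. ennreal (e * (1/2)^Suc k))"
      by (intro suminf_le less_imp_le U(4) summableI)
    also have "\<dots> = ennreal e"
    proof -
      have "(\<lambda>k. e * (1/2::real)^Suc k) sums e"
        using sums_mult[OF power_half_series, of e] by simp
      then show ?thesis
        using \<open>0 < e\<close> by (simp add: suminf_ennreal2 sums_iff)
    qed
    finally show ?thesis by simp
  qed
  then have "hausdorff_pre s \<delta> (\<Union>k. E k) \<le> 0"
    by (rule ennreal_le_epsilon) auto
  then show ?thesis by simp
qed

definition grid_cell :: "real \<Rightarrow> ('a \<Rightarrow> int) \<Rightarrow> 'a::euclidean_space set" where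
  "grid_cell r g =
     cbox (\<Sum>b\<in>Basis. (r * of_int (g b)) *\<^sub>R b) (\<Sum>b\<in>Basis. (r * (of_int (g b) + 1)) *\<^sub>R b)"

lemma inner_sum_Basis_coeff:
  "b \<in> Basis \<Longrightarrow> (\<Sum>b'\<in>Basis. c b' *\<^sub>R b') \<bullet> b = c b"
  by (simp add: inner_sum_left inner_Basis if_distrib cong: if_cong)

lemma mem_grid_cell:
  "y \<in> grid_cell r g \<longleftrightarrow> (\<forall>b\<in>Basis. r * of_int (g b) \<le> y \<bullet> b \<and> y \<bullet> b \<le> r * (of_int (g b) + 1))"
  by (auto simp: grid_cell_def mem_box inner_sum_Basis_coeff)

lemma bounded_grid_cell [simp]: "bounded (grid_cell r g)"
  by (simp add: grid_cell_def)

lemma diameter_grid_cell: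
  fixes r :: real
  assumes "0 \<le> r"
  shows "diameter (grid_cell r (g :: 'a \<Rightarrow> int)) \<le> DIM('a::euclidean_space) * r"
proof -
  let ?lo = "\<Sum>b\<in>Basis. (r * of_int (g b)) *\<^sub>R b :: 'a"
  let ?hi = "\<Sum>b\<in>Basis. (r * (of_int (g b) + 1)) *\<^sub>R b :: 'a"
  have "\<forall>b\<in>Basis. ?lo \<bullet> b \<le> ?hi \<bullet> b"
    using assms by (auto simp: inner_sum_Basis_coeff intro!: mult_left_mono)
  then have "diameter (grid_cell r g) = norm (?lo - ?hi)"
    unfolding grid_cell_def dist_norm[symmetric] by (rule diameter_cbox)
  also have "\<dots> = norm (?hi - ?lo)"
    by (rule norm_minus_commute)
  also have "?hi - ?lo = (\<Sum>b\<in>Basis. r *\<^sub>R b)"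
    by (simp add: sum_subtractf[symmetric] scaleR_diff_left[symmetric] distrib_left)
  also have "norm (\<Sum>b\<in>Basis. r *\<^sub>R b :: 'a) \<le> (\<Sum>b\<in>(Basis :: 'a set). r)"
    using norm_sum[of "\<lambda>b. r *\<^sub>R b" "Basis :: 'a set"] assms by simp
  also have "\<dots> = DIM('a) * r"
    by simp
  finally show ?thesis .
qed

lemma cube_subset_grid_cells:
  fixes k r :: real
  assumes "0 < r" "k / r \<le> real K"
  shows "{y :: 'a::euclidean_space. \<forall>b\<in>Basis. \<bar>y \<bullet> b\<bar> \<le> k}
    \<subseteq> (\<Union>g \<in> Basis \<rightarrow>\<^sub>E {- int K..int K}. grid_cell r g)"
proof
  fix y :: 'a assume y: "y \<in> {y. \<forall>b\<in>Basis. \<bar>y \<bullet> b\<bar> \<le> k}"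
  define g where "g = restrict (\<lambda>b. \<lfloor>y \<bullet> b / r\<rfloor>) Basis"
  have "g \<in> Basis \<rightarrow>\<^sub>E {- int K..int K}"
    unfolding g_def
  proof (intro restrict_PiE_iff[THEN iffD2] ballI)
    fix b :: 'a assume "b \<in> Basis"
    then have "- k \<le> y \<bullet> b" "y \<bullet> b \<le> k"
      using y by (auto simp: abs_le_iff)
    then have "- k / r \<le> y \<bullet> b / r" "y \<bullet> b / r \<le> k / r"
      using assms(1) by (simp_all add: field_simps)
    then show "\<lfloor>y \<bullet> b / r\<rfloor> \<in> {- int K..int K}"
      using assms(2) by (simp add: le_floor_iff floor_le_iff)
  qed
  moreover have "y \<in> grid_cell r g"
    unfolding mem_grid_cell
  proof
    fix b :: 'a assume "b \<in> Basis"
    have "of_int \<lfloor>y \<bullet> b / r\<rfloor> \<le> y \<bullet> b / r" "y \<bullet> b / r \<le> of_int \<lfloor>y \<bullet> b / r\<rfloor> + 1"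
      by linarith+
    then have "r * of_int \<lfloor>y \<bullet> b / r\<rfloor> \<le> r * (y \<bullet> b / r)"
        "r * (y \<bullet> b / r) \<le> r * (of_int \<lfloor>y \<bullet> b / r\<rfloor> + 1)"
      using assms(1) by (simp_all only: mult_left_mono less_imp_le)
    then show "r * of_int (g b) \<le> y \<bullet> b \<and> y \<bullet> b \<le> r * (of_int (g b) + 1)"
      using \<open>b \<in> Basis\<close> assms(1) by (simp add: g_def)
  qed
  ultimately show "y \<in> (\<Union>g \<in> Basis \<rightarrow>\<^sub>E {- int K..int K}. grid_cell r g)" by blast
qed

text \<open>The cube is covered by \<open>(2K + 1)\<^sup>m\<close> grid cells, \<open>K = \<lceil>k / r\<rceil>\<close>, each of diameter at most \<open>m r\<close>.\<close>

lemma hausdorff_pre_cube_le: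
  fixes k r \<delta> :: real
  assumes "0 \<le> k" "0 < r" "r \<le> 1" "DIM('a) * r \<le> \<delta>"
  shows "hausdorff_pre (real DIM('a) + 1) \<delta> {y :: 'a::euclidean_space. \<forall>b\<in>Basis. \<bar>y \<bullet> b\<bar> \<le> k}
    \<le> ennreal ((2 * k + 3) ^ DIM('a) * real DIM('a) ^ (DIM('a) + 1) * r)"
    (is "hausdorff_pre ?s \<delta> ?C \<le> _")
proof -
  define m where "m = DIM('a)"
  have "0 < m" by (simp add: m_def)
  define K where "K = nat \<lceil>k / r\<rceil>"
  have K: "k / r \<le> K" "real K < k / r + 1"
    using assms(1,2) ceiling_correct[of "k / r"] by (simp_all add: K_def)
  define G where "G = (Basis :: 'a set) \<rightarrow>\<^sub>E {- int K..int K}"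
  have diam: "diameter (grid_cell r g) \<le> m * r" for g :: "'a \<Rightarrow> int"
    using diameter_grid_cell[of r g] assms(2) by (simp add: m_def)
  have "0 \<le> \<delta>"
    using assms(2,4) mult_nonneg_nonneg[of "real DIM('a)" r] by linarith
  have "hausdorff_pre ?s \<delta> ?C \<le> (\<Sum>g\<in>G. ennreal (diameter (grid_cell r g) powr ?s))"
    using cube_subset_grid_cells[OF assms(2) K(1)] diam assms(4) \<open>0 \<le> \<delta>\<close>
    by (intro hausdorff_pre_le_finite_cover)
      (auto simp: G_def m_def intro: order_trans finite_PiE diameter_ge_0)
  also have "\<dots> \<le> (\<Sum>g\<in>G. ennreal ((m * r) ^ (m + 1)))"
  proof (intro sum_mono ennreal_leI)
    fix g :: "'a \<Rightarrow> int"
    have "diameter (grid_cell r g) powr ?s \<le> (m * r) powr ?s"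
      using diam by (intro powr_mono2 diameter_ge_0) auto
    also have "(m * r) powr ?s = (m * r) ^ (m + 1)"
      using powr_realpow[of "m * r" "m + 1"] \<open>0 < m\<close> assms(2) by (simp add: m_def add.commute)
    finally show "diameter (grid_cell r g) powr ?s \<le> (m * r) ^ (m + 1)" .
  qed
  also have "\<dots> = ennreal (((2 * K + 1) * r) ^ m * real m ^ (m + 1) * r)"
  proof -
    have "card G = (2 * K + 1) ^ m"
      by (simp add: G_def card_PiE m_def nat_add_distrib nat_mult_distrib)
    then have "(\<Sum>g\<in>G. (m * r) ^ (m + 1)) = ((2 * K + 1) * r) ^ m * real m ^ (m + 1) * r"
      by (simp add: power_mult_distrib)
    moreover have "(\<Sum>g\<in>G. ennreal ((m * r) ^ (m + 1))) = ennreal (\<Sum>g\<in>G. (m * r) ^ (m + 1))"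
      using assms(2) by (intro sum_ennreal) simp
    ultimately show ?thesis by (simp only:)
  qed
  also have "\<dots> \<le> ennreal ((2 * k + 3) ^ m * real m ^ (m + 1) * r)"
  proof (intro ennreal_leI mult_right_mono)
    have "(2 * K + 1) * r \<le> 2 * k + 3"
      using K(2) assms(2,3) by (simp add: field_simps)
    then show "((2 * K + 1) * r) ^ m \<le> (2 * k + 3) ^ m"
      using assms(2) by (intro power_mono) auto
  qed (use assms(2) in auto)
  finally show ?thesis by (simp add: m_def)
qed

lemma hausdorff_pre_cube_eq_0:
  fixes k \<delta> :: real
  assumes "0 \<le> k" "0 < \<delta>"
  shows "hausdorff_pre (real DIM('a) + 1) \<delta> {y :: 'a::euclidean_space. \<forall>b\<in>Basis. \<bar>y \<bullet> b\<bar> \<le> k} = 0"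
    (is "hausdorff_pre ?s \<delta> ?C = 0")
proof -
  define X where "X = (2 * k + 3) ^ DIM('a) * real DIM('a) ^ (DIM('a) + 1)"
  have "0 < X" using assms by (simp add: X_def)
  have "hausdorff_pre ?s \<delta> ?C \<le> 0 + ennreal e" if "0 < e" for e
  proof -
    define r where "r = min 1 (min (\<delta> / DIM('a)) (e / X))"
    have "0 < r" "r \<le> 1" "r \<le> \<delta> / DIM('a)" "r \<le> e / X"
      using assms \<open>0 < e\<close> \<open>0 < X\<close> by (simp_all add: r_def)
    then have "hausdorff_pre ?s \<delta> ?C \<le> ennreal (X * r)"
      unfolding X_def using assms(1)
      by (intro hausdorff_pre_cube_le) (simp_all add: le_divide_eq mult.commute)
    also have "\<dots> \<le> ennreal e"
      using \<open>r \<le> e / X\<close> \<open>0 < X\<close> by (intro ennreal_leI) (simp add: le_divide_eq mult.commute)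
    finally show ?thesis by simp
  qed
  then have "hausdorff_pre ?s \<delta> ?C \<le> 0"
    by (rule ennreal_le_epsilon) auto
  then show ?thesis by simp
qed

lemma hausdorff_measure_DIM_plus_one_eq_0:
  "hausdorff_measure (real DIM('a) + 1) (E :: 'a::euclidean_space set) = 0"
proof -
  have "hausdorff_pre (real DIM('a) + 1) \<delta> E = 0" if "0 < \<delta>" for \<delta>
  proof -
    have "E \<subseteq> (\<Union>k::nat. {y :: 'a. \<forall>b\<in>Basis. \<bar>y \<bullet> b\<bar> \<le> real k})"
    proof
      fix y assume "y \<in> E"
      obtain k :: nat where "norm y \<le> real k"
        using real_arch_simple by blast
      then show "y \<in> (\<Union>k::nat. {y :: 'a. \<forall>b\<in>Basis. \<bar>y \<bullet> b\<bar> \<le> real k})"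
        using Basis_le_norm[of _ y] by (force intro: order_trans)
    qed
    then have "hausdorff_pre (real DIM('a) + 1) \<delta> E
        \<le> hausdorff_pre (real DIM('a) + 1) \<delta> (\<Union>k::nat. {y :: 'a. \<forall>b\<in>Basis. \<bar>y \<bullet> b\<bar> \<le> real k})"
      by (rule hausdorff_pre_mono)
    also have "\<dots> = 0"
      using that by (intro hausdorff_pre_UN_eq_0 hausdorff_pre_cube_eq_0) auto
    finally show ?thesis by simp
  qed
  then show ?thesis unfolding hausdorff_measure_def by simp
qed

lemma hausdorff_measure_mono:
  "E \<subseteq> F \<Longrightarrow> hausdorff_measure s E \<le> hausdorff_measure s F"
  unfolding hausdorff_measure_def by (intro SUP_subset_mono order_refl hausdorff_pre_mono)

lemma hausdorff_pre_le_hausdorff_measure: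
  "0 < \<delta> \<Longrightarrow> hausdorff_pre s \<delta> E \<le> hausdorff_measure s E"
  unfolding hausdorff_measure_def by (rule SUP_upper) simp

text \<open>\<open>hausdorff_dim\<close> is an infimum of reals, which says nothing unless the set of null exponents
  is nonempty; \<open>DIM('a) + 1\<close> provides one.\<close>

lemma hausdorff_dim_lessE:
  fixes E :: "'a::euclidean_space set"
  assumes "hausdorff_dim E < r"
  obtains s where "s < r" "hausdorff_measure s E = 0"
proof -
  let ?S = "{s. 0 \<le> s \<and> hausdorff_measure s E = 0}"
  have "real DIM('a) + 1 \<in> ?S"
    using hausdorff_measure_DIM_plus_one_eq_0[where 'a='a] by simp
  then obtain s where "s \<in> ?S" "s < r"
    using cInf_lessD[of ?S r] assms unfolding hausdorff_dim_def by blast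
  then show ?thesis using that by blast
qed

lemma power_le_powr_of_le_1:
  fixes x s :: real
  assumes "0 \<le> x" "x \<le> 1" "s \<le> real n" "0 < n"
  shows "x ^ n \<le> x powr s"
proof (cases "x = 0")
  case False
  then have "x ^ n = x powr real n"
    using assms(1) by (simp add: powr_realpow)
  also have "\<dots> \<le> x powr s"
    using assms by (intro powr_mono') auto
  finally show ?thesis .
qed (use assms in \<open>simp add: power_0_left\<close>)

lemma lipschitz_on_image_subset_cball:
  assumes "L-lipschitz_on P g" "p \<in> P" "p \<in> U" "bounded U"
  shows "g ` (P \<inter> U) \<subseteq> cball (g p) (L * diameter U)"
proof
  fix y assume "y \<in> g ` (P \<inter> U)"
  then obtain q where "q \<in> P" "q \<in> U" "y = g q" by blast
  have "dist (g p) (g q) \<le> L * dist p q"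
    using assms(1,2) \<open>q \<in> P\<close> by (rule lipschitz_onD)
  also have "\<dots> \<le> L * diameter U"
    using lipschitz_on_nonneg[OF assms(1)] diameter_bounded_bound[OF assms(4,3) \<open>q \<in> U\<close>]
    by (rule mult_left_mono[rotated])
  finally show "y \<in> cball (g p) (L * diameter U)"
    by (simp add: \<open>y = g q\<close> mem_cball)
qed

lemma emeasure_cball_le_powr:
  fixes x :: "'a::euclidean_space" and L d s :: real
  assumes "0 \<le> L" "0 \<le> d" "d \<le> 1" "s \<le> DIM('a)"
  shows "emeasure lebesgue (cball x (L * d))
    \<le> ennreal (unit_ball_vol DIM('a) * L ^ DIM('a)) * ennreal (d powr s)"
proof -
  have "emeasure lebesgue (cball x (L * d)) = ennreal (unit_ball_vol DIM('a) * L ^ DIM('a) * d ^ DIM('a))"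
    using assms(1,2) by (simp add: emeasure_cball power_mult_distrib mult.assoc)
  also have "\<dots> \<le> ennreal (unit_ball_vol DIM('a) * L ^ DIM('a) * d powr s)"
    using assms by (intro ennreal_leI mult_left_mono power_le_powr_of_le_1) auto
  also have "\<dots> = ennreal (unit_ball_vol DIM('a) * L ^ DIM('a)) * ennreal (d powr s)"
    using assms(1) by (simp add: ennreal_mult)
  finally show ?thesis .
qed

lemma negligible_if_emeasure_le:
  assumes "\<And>e. 0 < e \<Longrightarrow> \<exists>T \<in> sets lebesgue. S \<subseteq> T \<and> emeasure lebesgue T \<le> ennreal e"
  shows "negligible S"
  unfolding negligible_outer_le
proof (intro allI impI)
  fix e :: real assume "0 < e"
  then obtain T where T: "T \<in> sets lebesgue" "S \<subseteq> T" "emeasure lebesgue T \<le> ennreal e"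
    using assms by blast
  have "emeasure lebesgue T < \<infinity>"
    using T(3) by (rule order.strict_trans1) simp
  then have "T \<in> lmeasurable"
    using T(1) by (intro fmeasurableI)
  moreover have "measure lebesgue T \<le> e"
    using T(3) \<open>0 < e\<close> by (simp add: measure_def enn2real_leI)
  ultimately show "\<exists>T. S \<subseteq> T \<and> T \<in> lmeasurable \<and> measure lebesgue T \<le> e"
    using T(2) by blast
qed

lemma negligible_lipschitz_image:
  fixes g :: "'b::metric_space \<Rightarrow> 'a::euclidean_space"
  assumes null: "hausdorff_measure s P = 0" and s: "s \<le> DIM('a)" and lip: "L-lipschitz_on P g"
  shows "negligible (g ` P)"
proof (rule negligible_if_emeasure_le)
  fix e :: real assume "0 < e"
  define c where "c = unit_ball_vol DIM('a) * L ^ DIM('a)"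
  have "0 \<le> L" using lip by (rule lipschitz_on_nonneg)
  then have "0 \<le> c" by (simp add: c_def)
  define eps where "eps = e / (c + 1)"
  have eps: "0 < eps" "c * eps \<le> e"
    using \<open>0 < e\<close> \<open>0 \<le> c\<close> by (auto simp: eps_def field_simps)
  have "hausdorff_pre s 1 P < ennreal eps"
    using hausdorff_pre_le_hausdorff_measure[of 1 s P] null eps(1) by simp
  then obtain U where U: "P \<subseteq> (\<Union>i. U i)" "\<And>i. bounded (U i)" "\<And>i. diameter (U i) \<le> 1"
    and U_sum: "(\<Sum>i. ennreal (diameter (U i) powr s)) < ennreal eps"
    by (rule hausdorff_pre_lessE) blast
  define T where "T i = (if P \<inter> U i = {} then {}
    else cball (g (SOME p. p \<in> P \<inter> U i)) (L * diameter (U i)))" for i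
  have image_T: "g ` (P \<inter> U i) \<subseteq> T i" for i
  proof (cases "P \<inter> U i = {}")
    case False
    define p where "p = (SOME p. p \<in> P \<inter> U i)"
    from False have "\<exists>p. p \<in> P \<inter> U i" by blast
    then have "p \<in> P \<inter> U i"
      unfolding p_def by (rule someI_ex)
    then have "g ` (P \<inter> U i) \<subseteq> cball (g p) (L * diameter (U i))"
      using lip U(2) by (intro lipschitz_on_image_subset_cball) auto
    moreover have "T i = cball (g p) (L * diameter (U i))"
      using False by (simp add: T_def p_def)
    ultimately show ?thesis by simp
  qed (simp add: T_def)
  have "g ` P \<subseteq> (\<Union>i. T i)"
  proof
    fix y assume "y \<in> g ` P"
    then obtain p where "p \<in> P" "y = g p" by blast
    moreover obtain i where "p \<in> U i" using U(1) \<open>p \<in> P\<close> by blast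
    ultimately show "y \<in> (\<Union>i. T i)" using image_T[of i] by blast
  qed
  have T_sets: "T i \<in> sets lebesgue" for i
    by (simp add: T_def)
  have T_measure: "emeasure lebesgue (T i) \<le> ennreal c * ennreal (diameter (U i) powr s)" for i
  proof (cases "P \<inter> U i = {}")
    case False
    show ?thesis
      unfolding T_def c_def if_not_P[OF False]
      by (rule emeasure_cball_le_powr[OF \<open>0 \<le> L\<close> diameter_ge_0[OF U(2)] U(3) s])
  qed (simp add: T_def)
  have "emeasure lebesgue (\<Union>i. T i) \<le> (\<Sum>i. emeasure lebesgue (T i))"
    using T_sets by (intro emeasure_subadditive_countably) auto
  also have "\<dots> \<le> (\<Sum>i. ennreal c * ennreal (diameter (U i) powr s))"
    using T_measure by (intro suminf_le summableI)
  also have "\<dots> \<le> ennreal c * ennreal eps"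
    unfolding ennreal_suminf_cmult using U_sum by (intro mult_left_mono) auto
  also have "\<dots> = ennreal (c * eps)"
    using eps(1) \<open>0 \<le> c\<close> by (simp add: ennreal_mult)
  also have "\<dots> \<le> ennreal e"
    using eps(2) by (rule ennreal_leI)
  finally have "emeasure lebesgue (\<Union>i. T i) \<le> ennreal e" .
  moreover have "(\<Union>i. T i) \<in> sets lebesgue"
    using T_sets by blast
  ultimately show "\<exists>T \<in> sets lebesgue. g ` P \<subseteq> T \<and> emeasure lebesgue T \<le> ennreal e"
    using \<open>g ` P \<subseteq> (\<Union>i. T i)\<close> by blast
qed

lemma dist_solutions_le:
  fixes f :: "'b::real_normed_vector \<Rightarrow> 'a::real_normed_vector \<Rightarrow> 'a"
  assumes M: "0 \<le> M1" "M1 < M2"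
    and f_x: "norm (f x t - f x' t) \<le> M1 * norm (x - x')"
    and f_t: "norm (f x' t - f x' t') \<le> M1 * norm (t - t')"
    and sol: "M2 *\<^sub>R t + f x t = a" and sol': "M2 *\<^sub>R t' + f x' t' = a'"
  shows "dist t t' \<le> (1 + M1) / (M2 - M1) * dist (a, x) (a', x')"
proof -
  define d where "d = dist (a, x) (a', x')"
  have "norm (a - a') \<le> d" "norm (x - x') \<le> d"
    using dist_fst_le[of "(a, x)" "(a', x')"] dist_snd_le[of "(a, x)" "(a', x')"]
    by (simp_all add: d_def dist_norm)
  have "M2 *\<^sub>R (t - t') = (a - a') - (f x t - f x' t')"
    using sol sol' by (simp add: algebra_simps)
  moreover have "norm (M2 *\<^sub>R (t - t')) = M2 * norm (t - t')"
    using M by simp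
  ultimately have "M2 * norm (t - t') = norm ((a - a') - (f x t - f x' t'))"
    by simp
  also have "\<dots> \<le> norm (a - a') + norm (f x t - f x' t')"
    by (rule norm_triangle_ineq4)
  also have "norm (f x t - f x' t') \<le> M1 * norm (x - x') + M1 * norm (t - t')"
    using f_x f_t by (rule norm_diff_triangle_le)
  finally have "M2 * norm (t - t') \<le> d + M1 * d + M1 * norm (t - t')"
    using \<open>norm (a - a') \<le> d\<close> mult_left_mono[OF \<open>norm (x - x') \<le> d\<close> M(1)] by linarith
  then have "(M2 - M1) * dist t t' \<le> (1 + M1) * d"
    by (simp add: dist_norm algebra_simps)
  then have "dist t t' \<le> (1 + M1) * d / (M2 - M1)"
    using M by (simp add: pos_le_divide_eq mult.commute)
  then show ?thesis by (simp add: d_def)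
qed

lemma solution_set_lipschitz_image:
  fixes f :: "'b::real_normed_vector \<Rightarrow> 'a::real_normed_vector \<Rightarrow> 'a"
  assumes M: "0 \<le> M1" "M1 < M2"
    and f_x: "\<And>x y t. x \<in> B \<Longrightarrow> y \<in> B \<Longrightarrow> norm (f x t - f y t) \<le> M1 * norm (x - y)"
    and f_t: "\<And>x t t'. x \<in> B \<Longrightarrow> norm (f x t - f x t') \<le> M1 * norm (t - t')"
  obtains P g where "P \<subseteq> A \<times> B" "((1 + M1) / (M2 - M1))-lipschitz_on P g"
    "{t. \<exists>x\<in>B. M2 *\<^sub>R t + f x t \<in> A} = g ` P"
proof
  define P where "P = {p \<in> A \<times> B. \<exists>t. M2 *\<^sub>R t + f (snd p) t = fst p}"
  define g where "g p = (SOME t. M2 *\<^sub>R t + f (snd p) t = fst p)" for p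
  have g: "M2 *\<^sub>R g p + f (snd p) (g p) = fst p" if "p \<in> P" for p
    using that unfolding P_def g_def by (auto intro: someI_ex)
  have dist_g: "dist (g p) t \<le> (1 + M1) / (M2 - M1) * dist p (a, x)"
    if "p \<in> P" "x \<in> B" "M2 *\<^sub>R t + f x t = a" for p t a x
  proof -
    have "snd p \<in> B" using \<open>p \<in> P\<close> by (auto simp: P_def)
    from dist_solutions_le[OF M f_x[OF this \<open>x \<in> B\<close>] f_t[OF \<open>x \<in> B\<close>] g[OF \<open>p \<in> P\<close>] that(3)]
    show ?thesis by simp
  qed
  show "P \<subseteq> A \<times> B" by (auto simp: P_def)
  show "((1 + M1) / (M2 - M1))-lipschitz_on P g"
  proof (rule lipschitz_onI)
    fix p q assume "p \<in> P" "q \<in> P"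
    moreover from \<open>q \<in> P\<close> have "snd q \<in> B" by (auto simp: P_def)
    ultimately show "dist (g p) (g q) \<le> (1 + M1) / (M2 - M1) * dist p q"
      using dist_g[of p "snd q" "g q" "fst q"] g[of q] by simp
  qed (use M in simp)
  show "{t. \<exists>x\<in>B. M2 *\<^sub>R t + f x t \<in> A} = g ` P"
  proof (intro equalityI subsetI)
    fix t assume "t \<in> {t. \<exists>x\<in>B. M2 *\<^sub>R t + f x t \<in> A}"
    then obtain x where "x \<in> B" "M2 *\<^sub>R t + f x t \<in> A" by blast
    then have p: "(M2 *\<^sub>R t + f x t, x) \<in> P" by (auto simp: P_def)
    then have "g (M2 *\<^sub>R t + f x t, x) = t"
      using dist_g[OF p \<open>x \<in> B\<close>, of t "M2 *\<^sub>R t + f x t"] by simp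
    with p show "t \<in> g ` P" by (metis image_eqI)
  next
    fix t assume "t \<in> g ` P"
    then obtain p where "p \<in> P" "t = g p" by blast
    then show "t \<in> {t. \<exists>x\<in>B. M2 *\<^sub>R t + f x t \<in> A}"
      using g[OF \<open>p \<in> P\<close>] by (force simp: P_def)
  qed
qed

theorem mainTheorem4:
  fixes A B :: "'a::euclidean_space set"
    and f :: "'a \<Rightarrow> 'a \<Rightarrow> 'a"
    and M1 M2 :: real
  assumes "hausdorff_dim (A \<times> B) < real DIM('a)"
    and "0 < M1" and "M1 < M2"
    and "\<And>x y t. x \<in> B \<Longrightarrow> y \<in> B \<Longrightarrow> norm (f x t - f y t) \<le> M1 * norm (x - y)"
    and "\<And>x t t'. x \<in> B \<Longrightarrow> norm (f x t - f x t') \<le> M1 * norm (t - t')"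
  shows "{t. \<exists>x\<in>B. M2 *\<^sub>R t + f x t \<in> A} \<in> null_sets lebesgue"
proof -
  obtain s where "s < real DIM('a)" "hausdorff_measure s (A \<times> B) = 0"
    using assms(1) by (rule hausdorff_dim_lessE)
  obtain P g where P: "P \<subseteq> A \<times> B" and lip: "((1 + M1) / (M2 - M1))-lipschitz_on P g"
    and image: "{t. \<exists>x\<in>B. M2 *\<^sub>R t + f x t \<in> A} = g ` P"
    using less_imp_le[OF assms(2)] assms(3-5) by (rule solution_set_lipschitz_image)
  have "hausdorff_measure s P = 0"
    using hausdorff_measure_mono[OF P, of s] \<open>hausdorff_measure s (A \<times> B) = 0\<close> by simp
  then have "negligible (g ` P)"
    using \<open>s < real DIM('a)\<close> lip by (intro negligible_lipschitz_image) auto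
  then show ?thesis
    unfolding image negligible_iff_null_sets .
qed

end
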